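(* Let $k\ge 2$ and let $((G_n,S_n))_{n\ge1}$ be a sequence in $\mathcal M_k$ converging to $(G,S)$. Let (P) be one of the properties: (NA) being non-amenable; (Fr) containing a non-abelian free subgroup; (La) being large. If $G_n$ has (P) for all sufficiently large $n$, then every finitely presented group admitting an epimorphism onto $G$ has (P).
   Context: $\mathcal M_k$ is the set of pairs $(G,S)$ with $S$ an ordered $k$-tuple of generators of $G$, identified with normal subgroups of the free group $F_k$ (kernels of the induced epimorphism $F_k\to G$), with the topology in which $N_n\to N$ iff for every finite $K\subset F_k$, $N_n\cap K=N\cap K$ for large $n$. A group is large if it has a finite-index subgroup admitting an epimorphism onto a non-abelian free group. *)

theory Defs
  imports "HOL-Algebra.Algebra"
begin

type_synonym word = "(nat \<times> bool) list"
  (* letter (i, True) = generator i, (i, False) = its inverse *)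

definition letters :: "word \<Rightarrow> nat set" where
  "letters w = fst ` set w"

definition word_inv :: "word \<Rightarrow> word" where
  "word_inv w = rev (map (\<lambda>(x, b). (x, \<not> b)) w)"

fun reduced :: "word \<Rightarrow> bool" where
  "reduced ((x, b) # (y, c) # w) = (\<not> (x = y \<and> b \<noteq> c) \<and> reduced ((y, c) # w))"
| "reduced _ = True"

definition eval_word :: "('g, 'm) monoid_scheme \<Rightarrow> (nat \<Rightarrow> 'g) \<Rightarrow> word \<Rightarrow> 'g" where
  "eval_word G s w =
     foldr (\<lambda>(x, b) acc. (if b then s x else inv\<^bsub>G\<^esub> (s x)) \<otimes>\<^bsub>G\<^esub> acc) w \<one>\<^bsub>G\<^esub>"

definition marked_group :: "nat \<Rightarrow> ('g, 'm) monoid_scheme \<Rightarrow> (nat \<Rightarrow> 'g) \<Rightarrow> bool" where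
  "marked_group k G S \<longleftrightarrow> group G \<and> (\<forall>i<k. S i \<in> carrier G)
     \<and> generate G (S ` {..<k}) = carrier G"

text \<open>Convergence in M_k: the kernels N_n of F_k \<rightarrow> G_n converge to the kernel N of
  F_k \<rightarrow> G, i.e. for every element w of F_k (represented by a word in the k letters),
  eventually w \<in> N_n iff w \<in> N.  (Equivalent to: N_n \<inter> K = N \<inter> K eventually, K finite.)\<close>
definition marked_converges ::
  "nat \<Rightarrow> (nat \<Rightarrow> ('g, 'm) monoid_scheme) \<Rightarrow> (nat \<Rightarrow> nat \<Rightarrow> 'g)
     \<Rightarrow> ('g, 'm) monoid_scheme \<Rightarrow> (nat \<Rightarrow> 'g) \<Rightarrow> bool" where
  "marked_converges k Gs Ss G S \<longleftrightarrow>
     (\<forall>w. letters w \<subseteq> {..<k} \<longrightarrow>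
        (\<forall>\<^sub>F n in sequentially.
            (eval_word (Gs n) (Ss n) w = \<one>\<^bsub>Gs n\<^esub>) \<longleftrightarrow> (eval_word G S w = \<one>\<^bsub>G\<^esub>)))"

text \<open>Words lying in the normal closure of R in the free group (on the letters).\<close>
inductive rel_consequence :: "word set \<Rightarrow> word \<Rightarrow> bool" for R where
  nil: "rel_consequence R []"
| rel: "r \<in> R \<Longrightarrow> rel_consequence R (u @ r @ word_inv u)"
| inv: "rel_consequence R w \<Longrightarrow> rel_consequence R (word_inv w)"
| app: "rel_consequence R v \<Longrightarrow> rel_consequence R w \<Longrightarrow> rel_consequence R (v @ w)"
| ins: "rel_consequence R (u @ v) \<Longrightarrow> rel_consequence R (u @ [(x, b), (x, \<not> b)] @ v)"
| del: "rel_consequence R (u @ [(x, b), (x, \<not> b)] @ v) \<Longrightarrow> rel_consequence R (u @ v)"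

definition finitely_presented :: "('g, 'm) monoid_scheme \<Rightarrow> bool" where
  "finitely_presented Gm \<longleftrightarrow> group Gm \<and>
     (\<exists>m s R. (\<forall>i<m. s i \<in> carrier Gm) \<and> generate Gm (s ` {..<m}) = carrier Gm
        \<and> finite R \<and> (\<forall>r\<in>R. letters r \<subseteq> {..<m})
        \<and> (\<forall>w. letters w \<subseteq> {..<m} \<longrightarrow>
               (eval_word Gm s w = \<one>\<^bsub>Gm\<^esub> \<longleftrightarrow> rel_consequence R w)))"

definition free_basis :: "('g, 'm) monoid_scheme \<Rightarrow> 'g set \<Rightarrow> bool" where
  "free_basis F B \<longleftrightarrow> B \<subseteq> carrier F \<and> generate F B = carrier F \<and>
     (\<forall>(f :: nat \<Rightarrow> 'g) w. inj_on f (letters w) \<longrightarrow> f ` letters w \<subseteq> B \<longrightarrow>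
         reduced w \<longrightarrow> w \<noteq> [] \<longrightarrow> eval_word F f w \<noteq> \<one>\<^bsub>F\<^esub>)"

definition nonabelian_free :: "('g, 'm) monoid_scheme \<Rightarrow> bool" where
  "nonabelian_free F \<longleftrightarrow> group F \<and> (\<exists>B. free_basis F B \<and> (\<exists>x\<in>B. \<exists>y\<in>B. x \<noteq> y))"

definition amenable :: "('g, 'm) monoid_scheme \<Rightarrow> bool" where
  "amenable G \<longleftrightarrow> (\<exists>\<mu> :: 'g set \<Rightarrow> real.
     \<mu> (carrier G) = 1 \<and> (\<forall>A \<subseteq> carrier G. \<mu> A \<ge> 0) \<and>
     (\<forall>A B. A \<subseteq> carrier G \<longrightarrow> B \<subseteq> carrier G \<longrightarrow> A \<inter> B = {} \<longrightarrow> \<mu> (A \<union> B) = \<mu> A + \<mu> B) \<and>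
     (\<forall>g\<in>carrier G. \<forall>A \<subseteq> carrier G. \<mu> (g <#\<^bsub>G\<^esub> A) = \<mu> A))"

definition has_free_subgroup :: "('g, 'm) monoid_scheme \<Rightarrow> bool" where
  "has_free_subgroup G \<longleftrightarrow> (\<exists>H. subgroup H G \<and> nonabelian_free (G\<lparr>carrier := H\<rparr>))"

text \<open>The target group is taken with carrier type 'g set, which is large enough to hold
  an isomorphic copy of any quotient of a subgroup of G.\<close>
definition large :: "('g, 'm) monoid_scheme \<Rightarrow> bool" where
  "large G \<longleftrightarrow> (\<exists>H. subgroup H G \<and> finite (rcosets\<^bsub>G\<^esub> H) \<and>
     (\<exists>(F :: 'g set monoid) \<phi>. nonabelian_free F \<and> \<phi> \<in> epi (G\<lparr>carrier := H\<rparr>) F))"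

datatype group_property = NA | Fr | La

fun has_property :: "group_property \<Rightarrow> ('g, 'm) monoid_scheme \<Rightarrow> bool" where
  "has_property NA G = (\<not> amenable G)"
| "has_property Fr G = has_free_subgroup G"
| "has_property La G = large G"

end

theory Submission
  imports Defs
begin

text \<open>
  Let \<open>\<Gamma>\<close> be finitely presented with an epimorphism \<open>h\<close> onto the limit
  \<open>G\<close> of the marked groups \<open>G\<^sub>n\<close>.  Send each generator of \<open>\<Gamma>\<close> to a word in the marked
  generators of \<open>G\<close> representing its image, and each marked generator of \<open>G\<close> back to a
  word in the generators of \<open>\<Gamma>\<close> representing a preimage.  In \<open>G\<close> this makes finitely many
  words trivial: the images of the finitely many relators of \<open>\<Gamma>\<close>, and the words saying
  that the marked generators are hit.  By convergence these words are trivial in \<open>G\<^sub>n\<close>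
  for all large \<open>n\<close>, so the same assignment defines an epimorphism \<open>\<Gamma> \<rightarrow> G\<^sub>n\<close>.  Finally
  each of the three properties passes from a quotient to the group: a free subgroup and
  a finite-index subgroup with free quotient lift along epimorphisms, and amenability
  descends to quotients (push the invariant mean forward).
\<close>

lemma group_hom_of_hom: "group G \<Longrightarrow> group H \<Longrightarrow> h \<in> hom G H \<Longrightarrow> group_hom G H h"
  by (simp add: group_hom_def group_hom_axioms_def)

lemma eval_Nil [simp]: "eval_word G s [] = \<one>\<^bsub>G\<^esub>"
  by (simp add: eval_word_def)

lemma eval_Cons [simp]:
  "eval_word G s ((x, b) # w) = (if b then s x else inv\<^bsub>G\<^esub> (s x)) \<otimes>\<^bsub>G\<^esub> eval_word G s w"
  by (simp add: eval_word_def)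

lemma letters_simps [simp]:
  "letters [] = {}" "letters ((x, b) # w) = insert x (letters w)"
  "letters (v @ w) = letters v \<union> letters w" "letters (word_inv w) = letters w"
  unfolding letters_def word_inv_def by (auto simp: image_iff) force+

lemma word_inv_simps [simp]:
  "word_inv [] = []" "word_inv ((x, b) # w) = word_inv w @ [(x, \<not> b)]"
  "word_inv (v @ w) = word_inv w @ word_inv v"
  by (auto simp: word_inv_def)

lemma eval_cong: "(\<forall>x\<in>letters w. s x = t x) \<Longrightarrow> eval_word G s w = eval_word G t w"
  by (induction w) auto

context group
begin

lemma eval_closed [simp]:
  "\<forall>x\<in>letters w. s x \<in> carrier G \<Longrightarrow> eval_word G s w \<in> carrier G"
  by (induction w) auto

lemma eval_append:
  "\<forall>x\<in>letters v. s x \<in> carrier G \<Longrightarrow> \<forall>x\<in>letters w. s x \<in> carrier G \<Longrightarrow>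
   eval_word G s (v @ w) = eval_word G s v \<otimes> eval_word G s w"
  by (induction v) (auto simp: m_assoc)

lemma eval_word_inv:
  "\<forall>x\<in>letters w. s x \<in> carrier G \<Longrightarrow> eval_word G s (word_inv w) = inv (eval_word G s w)"
proof (induction w)
  case (Cons a w)
  obtain x b where a: "a = (x, b)" by force
  with Cons.prems have "s x \<in> carrier G" "\<forall>y\<in>letters w. s y \<in> carrier G" by auto
  with Cons.IH show ?case by (auto simp: a eval_append inv_mult_group)
qed simp

lemma generate_word:
  assumes "S ` I \<subseteq> carrier G" "x \<in> generate G (S ` I)"
  shows "\<exists>w. letters w \<subseteq> I \<and> eval_word G S w = x"
  using assms(2)
proof induction
  case one
  show ?case by (intro exI[of _ "[]"]) simp
next
  case (incl y)
  then obtain i where "i \<in> I" "y = S i" by blast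
  with assms(1) show ?case by (intro exI[of _ "[(i, True)]"]) auto
next
  case (inv y)
  then obtain i where "i \<in> I" "y = S i" by blast
  with assms(1) show ?case by (intro exI[of _ "[(i, False)]"]) auto
next
  case (eng y z)
  then obtain v w where "letters v \<subseteq> I" "eval_word G S v = y" "letters w \<subseteq> I" "eval_word G S w = z"
    by blast
  moreover have "\<forall>x\<in>letters v. S x \<in> carrier G" "\<forall>x\<in>letters w. S x \<in> carrier G"
    using calculation assms(1) by blast+
  ultimately show ?case by (intro exI[of _ "v @ w"]) (auto simp: eval_append)
qed

lemma choose_words:
  assumes "S ` I \<subseteq> carrier G" "generate G (S ` I) = carrier G" "F ` J \<subseteq> carrier G"
  shows "\<exists>u. \<forall>j\<in>J. letters (u j) \<subseteq> I \<and> eval_word G S (u j) = F j"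
proof -
  have "\<forall>j\<in>J. \<exists>w. letters w \<subseteq> I \<and> eval_word G S w = F j"
    using generate_word[OF assms(1)] assms(2,3) by auto
  then show ?thesis by (rule bchoice)
qed

lemma eval_ends_with_inverse:
  assumes "\<forall>x\<in>letters w. s x \<in> carrier G" "s j \<in> carrier G"
  shows "eval_word G s (w @ [(j, False)]) = \<one> \<longleftrightarrow> eval_word G s w = s j"
proof -
  have "eval_word G s (w @ [(j, False)]) = eval_word G s w \<otimes> inv (s j)"
    using assms by (simp add: eval_append)
  then show ?thesis using assms by (metis eval_closed inv_closed inv_equality inv_inv r_inv)
qed

lemma eval_cancel_pair:
  assumes "\<forall>i. f i \<in> carrier G"
  shows "eval_word G f (u @ [(x, b), (x, \<not> b)] @ v) = eval_word G f (u @ v)"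
proof -
  have "eval_word G f ([(x, b), (x, \<not> b)] @ v) = eval_word G f v"
    using assms by (cases b) (simp_all add: m_assoc[symmetric])
  then show ?thesis using assms by (simp add: eval_append del: append.simps)
qed

lemma rel_consequence_sound:
  assumes f: "\<forall>i. f i \<in> carrier G" and fR: "\<forall>r\<in>R. eval_word G f r = \<one>"
  shows "rel_consequence R w \<Longrightarrow> eval_word G f w = \<one>"
proof (induction rule: rel_consequence.induct)
  case (rel r u)
  then show ?case using f fR by (simp add: eval_append eval_word_inv)
next
  case (inv w)
  then show ?case using f by (simp add: eval_word_inv)
next
  case (app v w)
  then show ?case using f by (simp add: eval_append)
next
  case (ins u v x b)
  then show ?case by (simp only: eval_cancel_pair[OF f])
next
  case (del u x b v)
  then show ?case by (simp only: eval_cancel_pair[OF f])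
qed simp

end

lemma eval_hom:
  assumes "group_hom G K h" "\<forall>x\<in>letters w. s x \<in> carrier G"
  shows "h (eval_word G s w) = eval_word K (h \<circ> s) w"
proof -
  interpret group_hom G K h by fact
  show ?thesis using assms(2) by (induction w) auto
qed

lemma eval_subgroup:
  assumes "group G" "subgroup H G" "\<forall>x\<in>letters w. f x \<in> H"
  shows "eval_word (G\<lparr>carrier := H\<rparr>) f w = eval_word G f w"
  using assms(3) by (induction w) (auto simp: group.m_inv_consistent[OF assms(1,2)])

text \<open>Substituting the word \<open>u i\<close> for the letter \<open>i\<close>; this is the action on words of
  the homomorphism between free groups sending generator \<open>i\<close> to \<open>u i\<close>.\<close>
definition subst_word :: "(nat \<Rightarrow> word) \<Rightarrow> word \<Rightarrow> word" where
  "subst_word u w = concat (map (\<lambda>(x, b). if b then u x else word_inv (u x)) w)"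

lemma subst_word_simps [simp]:
  "subst_word u [] = []"
  "subst_word u ((x, b) # w) = (if b then u x else word_inv (u x)) @ subst_word u w"
  by (simp_all add: subst_word_def)

lemma letters_subst_word:
  "\<forall>i\<in>letters w. letters (u i) \<subseteq> A \<Longrightarrow> letters (subst_word u w) \<subseteq> A"
  by (induction w) (auto split: if_split_asm)

lemma (in group) eval_subst_word:
  assumes "\<forall>i\<in>letters w. \<forall>x\<in>letters (u i). T x \<in> carrier G"
  shows "eval_word G T (subst_word u w) = eval_word G (\<lambda>i. eval_word G T (u i)) w"
  using assms
proof (induction w)
  case (Cons a w)
  obtain x b where a: "a = (x, b)" by force
  have "letters (subst_word u w) \<subseteq> {y. T y \<in> carrier G}"
    using Cons.prems by (intro letters_subst_word) (auto simp: a)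
  then have "\<forall>y\<in>letters (subst_word u w). T y \<in> carrier G" by blast
  with Cons show ?case by (auto simp: a eval_append eval_word_inv)
qed simp

definition presentation :: "('g, 'm) monoid_scheme \<Rightarrow> nat \<Rightarrow> (nat \<Rightarrow> 'g) \<Rightarrow> word set \<Rightarrow> bool" where
  "presentation \<Gamma> m s R \<longleftrightarrow> (\<forall>i<m. s i \<in> carrier \<Gamma>) \<and> generate \<Gamma> (s ` {..<m}) = carrier \<Gamma>
     \<and> finite R \<and> (\<forall>r\<in>R. letters r \<subseteq> {..<m})
     \<and> (\<forall>w. letters w \<subseteq> {..<m} \<longrightarrow> (eval_word \<Gamma> s w = \<one>\<^bsub>\<Gamma>\<^esub> \<longleftrightarrow> rel_consequence R w))"

lemma finitely_presented_iff: "finitely_presented \<Gamma> \<longleftrightarrow> group \<Gamma> \<and> (\<exists>m s R. presentation \<Gamma> m s R)"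
  by (simp add: finitely_presented_def presentation_def)

text \<open>Well-definedness for the universal property of a presentation: if an assignment
  \<open>f\<close> of the generators satisfies the relators, words with the same value in \<open>\<Gamma>\<close> have
  the same value under \<open>f\<close>, since they differ by a consequence of the relators.\<close>
lemma presentation_eval_eq:
  assumes \<Gamma>: "group \<Gamma>" and K: "group K" and pres: "presentation \<Gamma> m s R"
    and f: "\<forall>i. f i \<in> carrier K" and fR: "\<forall>r\<in>R. eval_word K f r = \<one>\<^bsub>K\<^esub>"
    and vw: "letters v \<subseteq> {..<m}" "letters w \<subseteq> {..<m}" "eval_word \<Gamma> s v = eval_word \<Gamma> s w"
  shows "eval_word K f v = eval_word K f w"
proof -
  interpret \<Gamma>: group \<Gamma> by fact
  interpret K: group K by fact
  have sc: "\<forall>x\<in>letters v. s x \<in> carrier \<Gamma>" "\<forall>x\<in>letters w. s x \<in> carrier \<Gamma>"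
    using pres vw unfolding presentation_def by blast+
  have fc: "\<forall>x\<in>letters u. f x \<in> carrier K" for u
    using f by blast
  have "eval_word \<Gamma> s (v @ word_inv w) = eval_word \<Gamma> s v \<otimes>\<^bsub>\<Gamma>\<^esub> inv\<^bsub>\<Gamma>\<^esub> eval_word \<Gamma> s w"
    using sc by (simp add: \<Gamma>.eval_append \<Gamma>.eval_word_inv)
  then have "eval_word \<Gamma> s (v @ word_inv w) = \<one>\<^bsub>\<Gamma>\<^esub>"
    using vw sc by simp
  then have "rel_consequence R (v @ word_inv w)"
    using pres vw unfolding presentation_def by simp
  then have "eval_word K f (v @ word_inv w) = \<one>\<^bsub>K\<^esub>"
    by (rule K.rel_consequence_sound[OF f fR])
  then have "eval_word K f v \<otimes>\<^bsub>K\<^esub> inv\<^bsub>K\<^esub> eval_word K f w = \<one>\<^bsub>K\<^esub>"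
    using fc by (simp add: K.eval_append K.eval_word_inv)
  then show ?thesis
    using fc by (metis K.eval_closed K.inv_closed K.inv_equality K.inv_inv)
qed

lemma presentation_hom:
  assumes \<Gamma>: "group \<Gamma>" and K: "group K" and pres: "presentation \<Gamma> m s R"
    and f: "\<forall>i. f i \<in> carrier K" and fR: "\<forall>r\<in>R. eval_word K f r = \<one>\<^bsub>K\<^esub>"
  shows "\<exists>\<psi>\<in>hom \<Gamma> K. \<forall>w. letters w \<subseteq> {..<m} \<longrightarrow> \<psi> (eval_word \<Gamma> s w) = eval_word K f w"
proof -
  interpret \<Gamma>: group \<Gamma> by fact
  interpret K: group K by fact
  have s: "\<forall>i<m. s i \<in> carrier \<Gamma>" and gen: "generate \<Gamma> (s ` {..<m}) = carrier \<Gamma>"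
    using pres unfolding presentation_def by blast+
  let ?W = "{w. letters w \<subseteq> {..<m}}"
  have fc: "\<forall>x\<in>letters w. f x \<in> carrier K" for w
    using f by blast
  have represented: "\<exists>w\<in>?W. eval_word \<Gamma> s w = x" if "x \<in> carrier \<Gamma>" for x
    using \<Gamma>.generate_word[of s "{..<m}" x] s gen that by auto
  define \<psi> where "\<psi> x = eval_word K f (SOME w. w \<in> ?W \<and> eval_word \<Gamma> s w = x)" for x
  have \<psi>_eval: "\<psi> (eval_word \<Gamma> s w) = eval_word K f w" if "w \<in> ?W" for w
  proof -
    have "\<exists>v. v \<in> ?W \<and> eval_word \<Gamma> s v = eval_word \<Gamma> s w" using that by blast
    from someI_ex[OF this] show ?thesis
      unfolding \<psi>_def using presentation_eval_eq[OF \<Gamma> K pres f fR] that by blast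
  qed
  have "\<psi> \<in> hom \<Gamma> K"
  proof (rule homI)
    fix x assume "x \<in> carrier \<Gamma>"
    then obtain w where "w \<in> ?W" "x = eval_word \<Gamma> s w" using represented by metis
    then show "\<psi> x \<in> carrier K" using \<psi>_eval fc by simp
  next
    fix x y assume "x \<in> carrier \<Gamma>" "y \<in> carrier \<Gamma>"
    then obtain v w where vw: "v \<in> ?W" "x = eval_word \<Gamma> s v" "w \<in> ?W" "y = eval_word \<Gamma> s w"
      using represented by metis
    then have "x \<otimes>\<^bsub>\<Gamma>\<^esub> y = eval_word \<Gamma> s (v @ w)"
      using s by (subst \<Gamma>.eval_append) auto
    then show "\<psi> (x \<otimes>\<^bsub>\<Gamma>\<^esub> y) = \<psi> x \<otimes>\<^bsub>K\<^esub> \<psi> y"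
      using vw \<psi>_eval[of "v @ w"] \<psi>_eval[of v] \<psi>_eval[of w] fc by (simp add: K.eval_append)
  qed
  with \<psi>_eval show ?thesis by blast
qed

lemma eval_subst_word_hom:
  assumes h: "group_hom \<Gamma> K h" and s: "\<forall>i<m. s i \<in> carrier \<Gamma>" and T: "\<forall>j<k. T j \<in> carrier K"
    and u: "\<forall>i<m. letters (u i) \<subseteq> {..<k} \<and> eval_word K T (u i) = h (s i)"
    and w: "letters w \<subseteq> {..<m}"
  shows "eval_word K T (subst_word u w) = h (eval_word \<Gamma> s w)"
proof -
  interpret h: group_hom \<Gamma> K h by fact
  have "eval_word K T (subst_word u w) = eval_word K (\<lambda>i. eval_word K T (u i)) w"
    using w u T by (intro h.H.eval_subst_word) blast
  also have "\<dots> = eval_word K (h \<circ> s) w"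
    using w u by (intro eval_cong) auto
  also have "\<dots> = h (eval_word \<Gamma> s w)"
    using w s by (intro eval_hom[symmetric] h) blast
  finally show ?thesis .
qed

text \<open>Witnesses for an epimorphism from \<open>\<langle>s | R\<rangle>\<close> onto a marked group \<open>(K, T)\<close>: words
  \<open>u i\<close> in the marked generators (the images of the generators \<open>s i\<close>) and words \<open>v j\<close> in
  the \<open>s i\<close> (preimages of the marked generators \<open>T j\<close>).  What has to hold is that the
  finitely many \<open>witness_words\<close> are trivial in \<open>K\<close>: the translated relators, and the
  words expressing that the translation of \<open>v j\<close> equals \<open>T j\<close>.\<close>
definition witness_words :: "nat \<Rightarrow> word set \<Rightarrow> (nat \<Rightarrow> word) \<Rightarrow> (nat \<Rightarrow> word) \<Rightarrow> word set" where
  "witness_words k R u v = subst_word u ` R \<union> (\<lambda>j. subst_word u (v j) @ [(j, False)]) ` {..<k}"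

definition epi_witness ::
  "nat \<Rightarrow> nat \<Rightarrow> word set \<Rightarrow> (nat \<Rightarrow> word) \<Rightarrow> (nat \<Rightarrow> word) \<Rightarrow> ('g, 'm) monoid_scheme \<Rightarrow> (nat \<Rightarrow> 'g) \<Rightarrow> bool"
where
  "epi_witness k m R u v K T \<longleftrightarrow> (\<forall>i<m. letters (u i) \<subseteq> {..<k}) \<and> (\<forall>j<k. letters (v j) \<subseteq> {..<m}) \<and>
     (\<forall>w\<in>witness_words k R u v. eval_word K T w = \<one>\<^bsub>K\<^esub>)"

lemma witness_words_letters:
  assumes "\<forall>i<m. letters (u i) \<subseteq> {..<k}" "\<forall>j<k. letters (v j) \<subseteq> {..<m}" "\<forall>r\<in>R. letters r \<subseteq> {..<m}"
  shows "\<forall>w\<in>witness_words k R u v. letters w \<subseteq> {..<k}"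
proof -
  have "letters (subst_word u w) \<subseteq> {..<k}" if "letters w \<subseteq> {..<m}" for w
    using that assms(1) by (intro letters_subst_word) blast
  with assms(2,3) show ?thesis
    unfolding witness_words_def by fastforce
qed

lemma subst_word_hom:
  assumes \<Gamma>: "group \<Gamma>" and pres: "presentation \<Gamma> m s R" and K: "group K"
    and T: "\<forall>j<k. T j \<in> carrier K" and u: "\<forall>i<m. letters (u i) \<subseteq> {..<k}"
    and relators: "\<forall>r\<in>R. eval_word K T (subst_word u r) = \<one>\<^bsub>K\<^esub>"
  shows "\<exists>\<psi>\<in>hom \<Gamma> K. \<forall>w. letters w \<subseteq> {..<m} \<longrightarrow> \<psi> (eval_word \<Gamma> s w) = eval_word K T (subst_word u w)"
proof -
  interpret K: group K by fact
  have R: "\<forall>r\<in>R. letters r \<subseteq> {..<m}"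
    using pres unfolding presentation_def by blast
  define f where "f i = (if i < m then eval_word K T (u i) else \<one>\<^bsub>K\<^esub>)" for i
  have f: "\<forall>i. f i \<in> carrier K"
    using u T unfolding f_def by (auto intro!: K.eval_closed)
  have subst: "eval_word K T (subst_word u w) = eval_word K f w" if "letters w \<subseteq> {..<m}" for w
  proof -
    have "eval_word K T (subst_word u w) = eval_word K (\<lambda>i. eval_word K T (u i)) w"
      using that u T by (intro K.eval_subst_word) blast
    also have "\<dots> = eval_word K f w"
      using that by (intro eval_cong) (auto simp: f_def)
    finally show ?thesis .
  qed
  then have "\<forall>r\<in>R. eval_word K f r = \<one>\<^bsub>K\<^esub>"
    using relators R by simp
  with presentation_hom[OF \<Gamma> K pres f] subst show ?thesis
    by simp
qed

text \<open>Witnesses yield an epimorphism: the homomorphism \<open>s i \<mapsto> u i\<close> hits every marked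
  generator \<open>T j\<close>, namely as the image of \<open>v j\<close>.\<close>
lemma presentation_epi:
  assumes \<Gamma>: "group \<Gamma>" and pres: "presentation \<Gamma> m s R" and K: "marked_group k K T"
    and wit: "epi_witness k m R u v K T"
  shows "\<exists>\<psi>. \<psi> \<in> epi \<Gamma> K"
proof -
  have "group K" and T: "\<forall>j<k. T j \<in> carrier K" and gen: "generate K (T ` {..<k}) = carrier K"
    using K unfolding marked_group_def by blast+
  interpret K: group K by fact
  have s: "\<forall>i<m. s i \<in> carrier \<Gamma>"
    using pres unfolding presentation_def by blast
  have u: "\<forall>i<m. letters (u i) \<subseteq> {..<k}" and v: "\<forall>j<k. letters (v j) \<subseteq> {..<m}"
    and trivial: "\<forall>w\<in>witness_words k R u v. eval_word K T w = \<one>\<^bsub>K\<^esub>"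
    using wit unfolding epi_witness_def by blast+
  have "\<forall>r\<in>R. eval_word K T (subst_word u r) = \<one>\<^bsub>K\<^esub>"
    using trivial unfolding witness_words_def by blast
  then obtain \<psi> where \<psi>: "\<psi> \<in> hom \<Gamma> K"
    and \<psi>_eval: "\<And>w. letters w \<subseteq> {..<m} \<Longrightarrow> \<psi> (eval_word \<Gamma> s w) = eval_word K T (subst_word u w)"
    using subst_word_hom[OF \<Gamma> pres \<open>group K\<close> T u] by blast
  interpret \<psi>: group_hom \<Gamma> K \<psi>
    using group_hom_of_hom[OF \<Gamma> \<open>group K\<close> \<psi>] .
  have "T j \<in> \<psi> ` carrier \<Gamma>" if "j < k" for j
  proof -
    have "eval_word K T (subst_word u (v j) @ [(j, False)]) = \<one>\<^bsub>K\<^esub>"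
      using trivial that unfolding witness_words_def by blast
    moreover have "letters (subst_word u (v j)) \<subseteq> {..<k}"
      using that u v by (intro letters_subst_word) auto
    ultimately have "eval_word K T (subst_word u (v j)) = T j"
      using K.eval_ends_with_inverse T that by blast
    then have "T j = \<psi> (eval_word \<Gamma> s (v j))"
      using that v \<psi>_eval by simp
    moreover have "eval_word \<Gamma> s (v j) \<in> carrier \<Gamma>"
      using that v s by (intro \<psi>.G.eval_closed) blast
    ultimately show ?thesis by blast
  qed
  then have "generate K (T ` {..<k}) \<subseteq> \<psi> ` carrier \<Gamma>"
    by (intro K.generate_subgroup_incl \<psi>.img_is_subgroup) auto
  then have "\<psi> ` carrier \<Gamma> = carrier K"
    using gen \<psi>.hom_closed by auto
  with \<psi> show ?thesis unfolding epi_def by blast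
qed

text \<open>Conversely, an epimorphism onto \<open>(G, S)\<close> provides witnesses: choose \<open>u i\<close>
  representing \<open>h (s i)\<close> and \<open>v j\<close> representing a preimage of \<open>S j\<close>; the translated words
  then evaluate as their originals do in \<open>\<Gamma>\<close>, followed by \<open>h\<close>.\<close>
lemma epi_witness_of_epi:
  assumes \<Gamma>: "group \<Gamma>" and pres: "presentation \<Gamma> m s R" and G: "marked_group k G S"
    and h: "h \<in> epi \<Gamma> G"
  shows "\<exists>u v. epi_witness k m R u v G S"
proof -
  interpret \<Gamma>: group \<Gamma> by fact
  have s: "\<forall>i<m. s i \<in> carrier \<Gamma>" and gen\<Gamma>: "generate \<Gamma> (s ` {..<m}) = carrier \<Gamma>"
    and R: "\<forall>r\<in>R. letters r \<subseteq> {..<m} \<and> rel_consequence R r"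
    and trivial: "\<forall>w. letters w \<subseteq> {..<m} \<longrightarrow> (eval_word \<Gamma> s w = \<one>\<^bsub>\<Gamma>\<^esub> \<longleftrightarrow> rel_consequence R w)"
    using pres rel_consequence.rel[of _ R "[]"] unfolding presentation_def by auto
  have "group G" and S: "\<forall>j<k. S j \<in> carrier G" and genG: "generate G (S ` {..<k}) = carrier G"
    using G unfolding marked_group_def by blast+
  interpret h: group_hom \<Gamma> G h
    using group_hom_of_hom[OF \<Gamma> \<open>group G\<close>] h unfolding epi_def by blast
  have onto: "h ` carrier \<Gamma> = carrier G" using h unfolding epi_def by blast
  have "S ` {..<k} \<subseteq> carrier G" "(h \<circ> s) ` {..<m} \<subseteq> carrier G"
    using S s by auto
  from h.H.choose_words[OF this(1) genG this(2)] obtain u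
    where u: "\<forall>i\<in>{..<m}. letters (u i) \<subseteq> {..<k} \<and> eval_word G S (u i) = (h \<circ> s) i" ..
  have "\<forall>j\<in>{..<k}. \<exists>x. x \<in> carrier \<Gamma> \<and> h x = S j"
    using S onto by (metis imageE lessThan_iff)
  then obtain x where x: "\<forall>j\<in>{..<k}. x j \<in> carrier \<Gamma> \<and> h (x j) = S j"
    by (rule bchoice[elim_format]) blast
  have "s ` {..<m} \<subseteq> carrier \<Gamma>" "x ` {..<k} \<subseteq> carrier \<Gamma>"
    using s x by auto
  from \<Gamma>.choose_words[OF this(1) gen\<Gamma> this(2)] obtain v
    where v: "\<forall>j\<in>{..<k}. letters (v j) \<subseteq> {..<m} \<and> eval_word \<Gamma> s (v j) = x j" ..
  have in_limit: "eval_word G S (subst_word u w) = h (eval_word \<Gamma> s w)" if "letters w \<subseteq> {..<m}" for w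
    using eval_subst_word_hom[OF h.group_hom_axioms s S _ that] u by simp
  have "eval_word G S (subst_word u r) = \<one>\<^bsub>G\<^esub>" if "r \<in> R" for r
  proof -
    have "eval_word \<Gamma> s r = \<one>\<^bsub>\<Gamma>\<^esub>" using that R trivial by blast
    then show ?thesis using that R in_limit by simp
  qed
  moreover have "eval_word G S (subst_word u (v j) @ [(j, False)]) = \<one>\<^bsub>G\<^esub>" if "j < k" for j
  proof -
    have "eval_word G S (subst_word u (v j)) = S j"
      using that v x in_limit by simp
    moreover have "letters (subst_word u (v j)) \<subseteq> {..<k}"
      using that u v by (intro letters_subst_word) auto
    ultimately show ?thesis
      using h.H.eval_ends_with_inverse S that by blast
  qed
  ultimately have "epi_witness k m R u v G S"
    unfolding epi_witness_def witness_words_def using u v by auto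
  then show ?thesis by blast
qed

lemma eventually_trivial_words:
  assumes conv: "marked_converges k Gs Ss G S" and "finite W"
    and W: "\<forall>w\<in>W. letters w \<subseteq> {..<k} \<and> eval_word G S w = \<one>\<^bsub>G\<^esub>"
  shows "\<forall>\<^sub>F n in sequentially. \<forall>w\<in>W. eval_word (Gs n) (Ss n) w = \<one>\<^bsub>Gs n\<^esub>"
proof (rule eventually_ball_finite[OF \<open>finite W\<close>], rule ballI)
  fix w assume "w \<in> W"
  with conv W have "\<forall>\<^sub>F n in sequentially.
      (eval_word (Gs n) (Ss n) w = \<one>\<^bsub>Gs n\<^esub>) \<longleftrightarrow> (eval_word G S w = \<one>\<^bsub>G\<^esub>)"
    unfolding marked_converges_def by blast
  then show "\<forall>\<^sub>F n in sequentially. eval_word (Gs n) (Ss n) w = \<one>\<^bsub>Gs n\<^esub>"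
    by (rule eventually_mono) (use W \<open>w \<in> W\<close> in blast)
qed

text \<open>The central lemma: an epimorphism from a finitely presented group onto the limit
  of a convergent sequence of marked groups yields epimorphisms onto all late terms,
  because witnesses in the limit are witnesses for the late terms.\<close>
lemma eventually_epi_of_finitely_presented:
  assumes Gs: "\<forall>n. marked_group k (Gs n) (Ss n)" and G: "marked_group k G S"
    and conv: "marked_converges k Gs Ss G S"
    and fp: "finitely_presented \<Gamma>" and h: "h \<in> epi \<Gamma> G"
  shows "\<forall>\<^sub>F n in sequentially. \<exists>\<psi>. \<psi> \<in> epi \<Gamma> (Gs n)"
proof -
  obtain m s R where pres: "presentation \<Gamma> m s R" and \<Gamma>: "group \<Gamma>"
    using fp unfolding finitely_presented_iff by blast
  have R: "finite R" "\<forall>r\<in>R. letters r \<subseteq> {..<m}"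
    using pres unfolding presentation_def by blast+
  obtain u v where wit: "epi_witness k m R u v G S"
    using epi_witness_of_epi[OF \<Gamma> pres G h] by blast
  then have uv: "\<forall>i<m. letters (u i) \<subseteq> {..<k}" "\<forall>j<k. letters (v j) \<subseteq> {..<m}"
    unfolding epi_witness_def by blast+
  have "finite (witness_words k R u v)"
    using R(1) unfolding witness_words_def by simp
  then have "\<forall>\<^sub>F n in sequentially. \<forall>w\<in>witness_words k R u v. eval_word (Gs n) (Ss n) w = \<one>\<^bsub>Gs n\<^esub>"
    using wit witness_words_letters[OF uv R(2)] unfolding epi_witness_def
    by (intro eventually_trivial_words[OF conv]) blast+
  then have "\<forall>\<^sub>F n in sequentially. epi_witness k m R u v (Gs n) (Ss n)"
    by (rule eventually_mono) (use uv in \<open>simp add: epi_witness_def\<close>)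
  then show ?thesis
    by (rule eventually_mono) (use presentation_epi[OF \<Gamma> pres] Gs in blast)
qed

lemma free_basisD:
  "free_basis F Y \<Longrightarrow> inj_on f (letters w) \<Longrightarrow> f ` letters w \<subseteq> Y \<Longrightarrow> reduced w \<Longrightarrow> w \<noteq> []
   \<Longrightarrow> eval_word F f w \<noteq> \<one>\<^bsub>F\<^esub>"
  unfolding free_basis_def by blast

lemma nonabelian_freeI:
  "group F \<Longrightarrow> free_basis F Y \<Longrightarrow> x \<in> Y \<Longrightarrow> y \<in> Y \<Longrightarrow> x \<noteq> y \<Longrightarrow> nonabelian_free F"
  unfolding nonabelian_free_def by blast

lemma finite_image_factor:
  assumes "finite (g ` D)" and "\<And>a b. a \<in> D \<Longrightarrow> b \<in> D \<Longrightarrow> g a = g b \<Longrightarrow> f a = f b"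
  shows "finite (f ` D)"
proof -
  have "f ` D \<subseteq> (\<lambda>c. f (inv_into D g c)) ` g ` D"
  proof
    fix z assume "z \<in> f ` D"
    then obtain a where "a \<in> D" "z = f a" by blast
    moreover have "f (inv_into D g (g a)) = f a"
      using assms(2) inv_into_into f_inv_into_f \<open>a \<in> D\<close> by (metis imageI)
    ultimately show "z \<in> (\<lambda>c. f (inv_into D g c)) ` g ` D" by force
  qed
  then show ?thesis using assms(1) finite_subset by blast
qed

text \<open>Freeness lifts along homomorphisms: if \<open>\<psi>\<close> maps \<open>L\<close> injectively into a free basis
  of a subgroup of \<open>K\<close>, then \<open>L\<close> freely generates the subgroup it generates, since a
  relation among elements of \<open>L\<close> would map to a relation among basis elements.\<close>
lemma free_basis_lift:
  assumes \<Gamma>: "group \<Gamma>" and K: "group K" and \<psi>: "\<psi> \<in> hom \<Gamma> K"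
    and H: "subgroup H K" and Y: "free_basis (K\<lparr>carrier := H\<rparr>) Y"
    and L: "L \<subseteq> carrier \<Gamma>" "inj_on \<psi> L" "\<psi> ` L \<subseteq> Y"
  shows "free_basis (\<Gamma>\<lparr>carrier := generate \<Gamma> L\<rparr>) L"
proof -
  interpret \<psi>: group_hom \<Gamma> K \<psi>
    using group_hom_of_hom[OF \<Gamma> K \<psi>] .
  have sub: "subgroup (generate \<Gamma> L) \<Gamma>"
    using \<psi>.G.generate_is_subgroup[OF L(1)] .
  have incl: "L \<subseteq> generate \<Gamma> L"
    using generate.incl[of _ L \<Gamma>] by blast
  have YH: "Y \<subseteq> H"
    using Y unfolding free_basis_def by simp
  have "eval_word (\<Gamma>\<lparr>carrier := generate \<Gamma> L\<rparr>) f w \<noteq> \<one>\<^bsub>\<Gamma>\<^esub>"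
    if f: "inj_on f (letters w)" "f ` letters w \<subseteq> L" and w: "reduced w" "w \<noteq> []" for f w
  proof
    assume "eval_word (\<Gamma>\<lparr>carrier := generate \<Gamma> L\<rparr>) f w = \<one>\<^bsub>\<Gamma>\<^esub>"
    moreover have "\<forall>x\<in>letters w. f x \<in> generate \<Gamma> L"
      using f(2) incl by blast
    ultimately have "eval_word \<Gamma> f w = \<one>\<^bsub>\<Gamma>\<^esub>"
      using eval_subgroup[OF \<Gamma> sub] by simp
    moreover have "\<forall>x\<in>letters w. f x \<in> carrier \<Gamma>"
      using f(2) L(1) by blast
    ultimately have "eval_word K (\<psi> \<circ> f) w = \<one>\<^bsub>K\<^esub>"
      using eval_hom[OF \<psi>.group_hom_axioms] by (metis \<psi>.hom_one)
    then have "eval_word (K\<lparr>carrier := H\<rparr>) (\<psi> \<circ> f) w = \<one>\<^bsub>K\<lparr>carrier := H\<rparr>\<^esub>"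
      using eval_subgroup[OF K H, of w "\<psi> \<circ> f"] f(2) L(3) YH by auto
    moreover have "inj_on (\<psi> \<circ> f) (letters w)"
      using f L(2) by (auto intro: comp_inj_on inj_on_subset)
    moreover have "(\<psi> \<circ> f) ` letters w \<subseteq> Y"
      using f(2) L(3) by auto
    ultimately show False
      using free_basisD[OF Y _ _ w] by blast
  qed
  moreover have "generate (\<Gamma>\<lparr>carrier := generate \<Gamma> L\<rparr>) L = generate \<Gamma> L"
    using \<psi>.G.generate_consistent[OF incl sub] .
  ultimately show ?thesis
    unfolding free_basis_def using incl by simp
qed

text \<open>Being non-abelian free is invariant under isomorphism (needed because largeness
  requires the free quotient to live in a type determined by the group).\<close>
lemma nonabelian_free_iso:
  assumes A: "group A" and K: "group K" and \<sigma>: "\<sigma> \<in> iso A K" and free: "nonabelian_free K"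
  shows "nonabelian_free A"
proof -
  have \<sigma>_hom: "\<sigma> \<in> hom A K" and inj: "inj_on \<sigma> (carrier A)" and onto: "\<sigma> ` carrier A = carrier K"
    using \<sigma> unfolding iso_def bij_betw_def by blast+
  interpret \<sigma>: group_hom A K \<sigma>
    using group_hom_of_hom[OF A K \<sigma>_hom] .
  obtain Y y y' where Y: "free_basis K Y" and "y \<in> Y" "y' \<in> Y" "y \<noteq> y'"
    using free unfolding nonabelian_free_def by blast
  have YK: "Y \<subseteq> carrier K" and genY: "generate K Y = carrier K"
    using Y unfolding free_basis_def by blast+
  define L where "L = {a \<in> carrier A. \<sigma> a \<in> Y}"
  have L: "L \<subseteq> carrier A"
    unfolding L_def by blast
  have imL: "\<sigma> ` L = Y"
  proof
    show "Y \<subseteq> \<sigma> ` L"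
    proof
      fix y assume "y \<in> Y"
      with YK onto obtain a where "a \<in> carrier A" "y = \<sigma> a" by blast
      with \<open>y \<in> Y\<close> show "y \<in> \<sigma> ` L" unfolding L_def by blast
    qed
  qed (auto simp: L_def)
  have "\<sigma> ` generate A L = \<sigma> ` carrier A"
    using \<sigma>.generate_img[OF L] imL genY onto by simp
  then have genL: "generate A L = carrier A"
    using inj_on_image_eq_iff[OF inj \<sigma>.G.generate_incl[OF L]] by blast
  have "free_basis (A\<lparr>carrier := generate A L\<rparr>) L"
    using Y imL by (intro free_basis_lift[OF A K \<sigma>_hom \<sigma>.H.subgroup_self _ L inj_on_subset[OF inj L]]) auto
  then have "free_basis A L"
    using genL by simp
  moreover obtain x x' where "x \<in> L" "\<sigma> x = y" "x' \<in> L" "\<sigma> x' = y'"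
    using imL \<open>y \<in> Y\<close> \<open>y' \<in> Y\<close> by (metis imageE)
  ultimately show ?thesis
    using nonabelian_freeI[OF A] \<open>y \<noteq> y'\<close> by blast
qed

text \<open>Containing a non-abelian free subgroup passes from a quotient to the group: lift
  two basis elements; by \<open>free_basis_lift\<close> the lifts generate a free group.\<close>
lemma has_free_subgroup_epi:
  assumes \<Gamma>: "group \<Gamma>" and K: "group K" and \<psi>: "\<psi> \<in> epi \<Gamma> K" and free: "has_free_subgroup K"
  shows "has_free_subgroup \<Gamma>"
proof -
  interpret \<Gamma>: group \<Gamma> by fact
  have \<psi>_hom: "\<psi> \<in> hom \<Gamma> K" and onto: "\<psi> ` carrier \<Gamma> = carrier K"
    using \<psi> unfolding epi_def by blast+
  obtain H Y y y' where H: "subgroup H K" and Y: "free_basis (K\<lparr>carrier := H\<rparr>) Y"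
    and "y \<in> Y" "y' \<in> Y" "y \<noteq> y'"
    using free unfolding has_free_subgroup_def nonabelian_free_def by blast
  then have "y \<in> \<psi> ` carrier \<Gamma>" "y' \<in> \<psi> ` carrier \<Gamma>"
    using subgroup.subset[OF H] onto unfolding free_basis_def by auto
  then obtain x x' where x: "x \<in> carrier \<Gamma>" "\<psi> x = y" and x': "x' \<in> carrier \<Gamma>" "\<psi> x' = y'"
    by blast
  let ?L = "{x, x'}"
  have "?L \<subseteq> carrier \<Gamma>" "inj_on \<psi> ?L" "\<psi> ` ?L \<subseteq> Y"
    using x x' \<open>y \<in> Y\<close> \<open>y' \<in> Y\<close> \<open>y \<noteq> y'\<close> by auto
  then have "free_basis (\<Gamma>\<lparr>carrier := generate \<Gamma> ?L\<rparr>) ?L"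
    by (rule free_basis_lift[OF \<Gamma> K \<psi>_hom H Y])
  moreover have sub: "subgroup (generate \<Gamma> ?L) \<Gamma>"
    using \<Gamma>.generate_is_subgroup x x' by simp
  moreover have "x \<noteq> x'"
    using x x' \<open>y \<noteq> y'\<close> by blast
  ultimately have "nonabelian_free (\<Gamma>\<lparr>carrier := generate \<Gamma> ?L\<rparr>)"
    by (intro nonabelian_freeI[OF \<Gamma>.subgroup_imp_group[OF sub]]) auto
  then show ?thesis
    unfolding has_free_subgroup_def using sub by blast
qed

context group_hom
begin

lemma subgroup_vimage:
  assumes "subgroup J H"
  shows "subgroup {x \<in> carrier G. h x \<in> J} G"
  using assms by (auto intro!: subgroup.intro simp: subgroup.m_closed subgroup.one_closed subgroup.m_inv_closed)

lemma epi_vimage: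
  assumes "subgroup J H" "h ` carrier G = carrier H"
  shows "h \<in> epi (G\<lparr>carrier := {x \<in> carrier G. h x \<in> J}\<rparr>) (H\<lparr>carrier := J\<rparr>)"
proof -
  have "J \<subseteq> h ` carrier G" using assms subgroup.subset by blast
  then show ?thesis unfolding epi_def hom_def by auto
qed

lemma rcos_vimage:
  assumes J: "subgroup J H" and a: "a \<in> carrier G" and b: "b \<in> carrier G"
    and eq: "J #>\<^bsub>H\<^esub> h a = J #>\<^bsub>H\<^esub> h b"
  shows "{x \<in> carrier G. h x \<in> J} #> a = {x \<in> carrier G. h x \<in> J} #> b"
proof -
  have "h a \<in> J #>\<^bsub>H\<^esub> h b"
    using eq H.rcos_self[OF _ J] a by (metis hom_closed)
  then have "h (a \<otimes> inv b) \<in> J"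
    using subgroup.rcos_module_imp[OF J H.is_group] a b by simp
  then have "a \<in> {x \<in> carrier G. h x \<in> J} #> b"
    using subgroup.rcos_module_rev[OF subgroup_vimage[OF J] G.is_group b a] a b by simp
  then show ?thesis
    using G.repr_independence[OF _ b subgroup_vimage[OF J]] by simp
qed

lemma finite_index_vimage:
  assumes J: "subgroup J H" and fin: "finite (rcosets\<^bsub>H\<^esub> J)"
  shows "finite (rcosets\<^bsub>G\<^esub> {x \<in> carrier G. h x \<in> J})"
proof -
  let ?P = "{x \<in> carrier G. h x \<in> J}"
  have "(\<lambda>a. J #>\<^bsub>H\<^esub> h a) ` carrier G \<subseteq> rcosets\<^bsub>H\<^esub> J"
    unfolding RCOSETS_def using hom_closed by blast
  then have "finite ((\<lambda>a. J #>\<^bsub>H\<^esub> h a) ` carrier G)"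
    using fin finite_subset by blast
  then have "finite ((\<lambda>a. ?P #> a) ` carrier G)"
    using rcos_vimage[OF J] by (rule finite_image_factor)
  moreover have "rcosets ?P = (\<lambda>a. ?P #> a) ` carrier G"
    unfolding RCOSETS_def by blast
  ultimately show ?thesis by simp
qed

end

text \<open>Largeness only needs some finite-index subgroup mapping onto some non-abelian free
  group; the free group can be replaced by an isomorphic copy of the required type, namely
  the quotient by the kernel.\<close>
lemma large_of_epi:
  assumes \<Gamma>: "group \<Gamma>" and H: "subgroup H \<Gamma>" and fin: "finite (rcosets\<^bsub>\<Gamma>\<^esub> H)"
    and \<phi>: "\<phi> \<in> epi (\<Gamma>\<lparr>carrier := H\<rparr>) F" and free: "nonabelian_free F"
  shows "large \<Gamma>"
proof -
  let ?H = "\<Gamma>\<lparr>carrier := H\<rparr>"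
  have "group ?H" using group.subgroup_imp_group[OF \<Gamma> H] .
  moreover have "group F" using free unfolding nonabelian_free_def by blast
  ultimately interpret \<phi>: group_hom ?H F \<phi>
    using group_hom_of_hom \<phi> unfolding epi_def by blast
  let ?N = "kernel ?H F \<phi>"
  have N: "?N \<lhd> ?H"
    by (rule \<phi>.normal_kernel)
  have "(\<lambda>Q. the_elem (\<phi> ` Q)) \<in> iso (?H Mod ?N) F"
    using \<phi> unfolding epi_def by (intro \<phi>.FactGroup_iso_set) simp
  then have "nonabelian_free (?H Mod ?N)"
    using nonabelian_free_iso[OF normal.factorgroup_is_group[OF N] \<open>group F\<close> _ free] by blast
  moreover have "(\<lambda>a. ?N #>\<^bsub>?H\<^esub> a) \<in> epi ?H (?H Mod ?N)"
    using normal.r_coset_hom_Mod[OF N] unfolding epi_def FactGroup_def RCOSETS_def by auto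
  ultimately show ?thesis
    unfolding large_def using H fin by blast
qed

text \<open>Largeness passes from a quotient to the group: pull back the finite-index subgroup
  and compose the restricted quotient map with its epimorphism onto a free group.\<close>
lemma large_epi:
  fixes K :: "('k, 'm) monoid_scheme"
  assumes \<Gamma>: "group \<Gamma>" and K: "group K" and \<psi>: "\<psi> \<in> epi \<Gamma> K" and "large K"
  shows "large \<Gamma>"
proof -
  interpret \<psi>: group_hom \<Gamma> K \<psi>
    using group_hom_of_hom[OF \<Gamma> K] \<psi> unfolding epi_def by blast
  obtain J \<phi> and F :: "'k set monoid" where J: "subgroup J K" "finite (rcosets\<^bsub>K\<^esub> J)"
    and free: "nonabelian_free F" and \<phi>: "\<phi> \<in> epi (K\<lparr>carrier := J\<rparr>) F"
    using \<open>large K\<close> unfolding large_def by blast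
  let ?P = "{x \<in> carrier \<Gamma>. \<psi> x \<in> J}"
  have "\<phi> \<circ> \<psi> \<in> epi (\<Gamma>\<lparr>carrier := ?P\<rparr>) F"
    using epi_compose[OF \<psi>.epi_vimage[OF J(1)] \<phi>] \<psi> unfolding epi_def by blast
  then show ?thesis
    using large_of_epi[OF \<Gamma> \<psi>.subgroup_vimage[OF J(1)] \<psi>.finite_index_vimage[OF J] _ free] by blast
qed

lemma (in group_hom) vimage_l_coset:
  assumes c: "c \<in> carrier G" and A: "A \<subseteq> carrier H"
  shows "carrier G \<inter> h -` (h c <#\<^bsub>H\<^esub> A) = c <# (carrier G \<inter> h -` A)"
proof (intro equalityI subsetI)
  fix x assume "x \<in> carrier G \<inter> h -` (h c <#\<^bsub>H\<^esub> A)"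
  then obtain a where x: "x \<in> carrier G" and a: "a \<in> A" "h x = h c \<otimes>\<^bsub>H\<^esub> a"
    unfolding l_coset_def by blast
  have "inv c \<otimes> x \<in> carrier G \<inter> h -` A"
    using c x a A by (auto simp: H.m_assoc[symmetric])
  moreover have "x = c \<otimes> (inv c \<otimes> x)"
    using c x by (simp add: G.m_assoc[symmetric])
  ultimately show "x \<in> c <# (carrier G \<inter> h -` A)"
    unfolding l_coset_def by blast
next
  fix x assume "x \<in> c <# (carrier G \<inter> h -` A)"
  then obtain y where y: "y \<in> carrier G" "h y \<in> A" and x: "x = c \<otimes> y"
    unfolding l_coset_def by blast
  then have "x \<in> carrier G" "h x = h c \<otimes>\<^bsub>H\<^esub> h y"
    using c by simp_all
  then show "x \<in> carrier G \<inter> h -` (h c <#\<^bsub>H\<^esub> A)"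
    using y unfolding l_coset_def by blast
qed

definition invariant_mean :: "('g, 'm) monoid_scheme \<Rightarrow> ('g set \<Rightarrow> real) \<Rightarrow> bool" where
  "invariant_mean G \<mu> \<longleftrightarrow> \<mu> (carrier G) = 1 \<and> (\<forall>A \<subseteq> carrier G. \<mu> A \<ge> 0) \<and>
     (\<forall>A B. A \<subseteq> carrier G \<longrightarrow> B \<subseteq> carrier G \<longrightarrow> A \<inter> B = {} \<longrightarrow> \<mu> (A \<union> B) = \<mu> A + \<mu> B) \<and>
     (\<forall>g\<in>carrier G. \<forall>A \<subseteq> carrier G. \<mu> (g <#\<^bsub>G\<^esub> A) = \<mu> A)"

lemma amenable_iff_invariant_mean: "amenable G \<longleftrightarrow> (\<exists>\<mu>. invariant_mean G \<mu>)"
  unfolding amenable_def invariant_mean_def ..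

text \<open>Amenability passes to quotients: push an invariant mean forward along the
  epimorphism, measuring a set by the mean of its preimage.\<close>
lemma amenable_epi:
  assumes \<Gamma>: "group \<Gamma>" and K: "group K" and \<psi>: "\<psi> \<in> epi \<Gamma> K" and "amenable \<Gamma>"
  shows "amenable K"
proof -
  interpret \<psi>: group_hom \<Gamma> K \<psi>
    using group_hom_of_hom[OF \<Gamma> K] \<psi> unfolding epi_def by blast
  have onto: "\<psi> ` carrier \<Gamma> = carrier K"
    using \<psi> unfolding epi_def by blast
  obtain \<mu> where \<mu>: "invariant_mean \<Gamma> \<mu>"
    using \<open>amenable \<Gamma>\<close> unfolding amenable_iff_invariant_mean ..
  have total: "\<mu> (carrier \<Gamma>) = 1"
    and nonneg: "\<And>A. A \<subseteq> carrier \<Gamma> \<Longrightarrow> \<mu> A \<ge> 0"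
    and additive: "\<And>A B. A \<subseteq> carrier \<Gamma> \<Longrightarrow> B \<subseteq> carrier \<Gamma> \<Longrightarrow> A \<inter> B = {} \<Longrightarrow> \<mu> (A \<union> B) = \<mu> A + \<mu> B"
    and invariant: "\<And>g A. g \<in> carrier \<Gamma> \<Longrightarrow> A \<subseteq> carrier \<Gamma> \<Longrightarrow> \<mu> (g <#\<^bsub>\<Gamma>\<^esub> A) = \<mu> A"
    using \<mu> unfolding invariant_mean_def by simp_all
  define \<nu> where "\<nu> A = \<mu> (carrier \<Gamma> \<inter> \<psi> -` A)" for A
  have "carrier \<Gamma> \<inter> \<psi> -` carrier K = carrier \<Gamma>"
    by auto
  then have "\<nu> (carrier K) = 1"
    unfolding \<nu>_def using total by simp
  moreover have "\<nu> A \<ge> 0" for A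
    unfolding \<nu>_def by (intro nonneg) blast
  moreover have "\<nu> (A \<union> B) = \<nu> A + \<nu> B" if "A \<inter> B = {}" for A B
  proof -
    have "carrier \<Gamma> \<inter> \<psi> -` (A \<union> B) = (carrier \<Gamma> \<inter> \<psi> -` A) \<union> (carrier \<Gamma> \<inter> \<psi> -` B)"
      by blast
    then show ?thesis
      unfolding \<nu>_def using that by (simp add: additive disjoint_iff)
  qed
  moreover have "\<nu> (g <#\<^bsub>K\<^esub> A) = \<nu> A" if "g \<in> carrier K" "A \<subseteq> carrier K" for g A
  proof -
    have "g \<in> \<psi> ` carrier \<Gamma>"
      using that(1) onto by simp
    then obtain c where "c \<in> carrier \<Gamma>" "g = \<psi> c"
      by blast
    then show ?thesis
      unfolding \<nu>_def using \<psi>.vimage_l_coset that(2) invariant by simp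
  qed
  ultimately have "invariant_mean K \<nu>"
    unfolding invariant_mean_def by blast
  then show ?thesis
    unfolding amenable_iff_invariant_mean by blast
qed

theorem mainTheorem6:
  fixes k :: nat
    and Gs :: "nat \<Rightarrow> ('a, 'b) monoid_scheme" and Ss :: "nat \<Rightarrow> nat \<Rightarrow> 'a"
    and G :: "('a, 'b) monoid_scheme" and S :: "nat \<Rightarrow> 'a"
    and P :: group_property
    and \<Gamma> :: "('c, 'd) monoid_scheme" and h :: "'c \<Rightarrow> 'a"
  assumes "k \<ge> 2"
    and "\<forall>n. marked_group k (Gs n) (Ss n)"
    and "marked_group k G S"
    and "marked_converges k Gs Ss G S"
    and "\<forall>\<^sub>F n in sequentially. has_property P (Gs n)"
    and "finitely_presented \<Gamma>"
    and "h \<in> epi \<Gamma> G"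
  shows "has_property P \<Gamma>"
proof -
  have "\<forall>\<^sub>F n in sequentially. (\<exists>\<psi>. \<psi> \<in> epi \<Gamma> (Gs n)) \<and> has_property P (Gs n)"
    using eventually_epi_of_finitely_presented[OF assms(2,3,4,6,7)] assms(5)
    by (rule eventually_conj)
  then obtain n \<psi> where \<psi>: "\<psi> \<in> epi \<Gamma> (Gs n)" and Pn: "has_property P (Gs n)"
    unfolding eventually_sequentially by blast
  have \<Gamma>: "group \<Gamma>" and Gn: "group (Gs n)"
    using assms(2,6) unfolding finitely_presented_def marked_group_def by blast+
  show ?thesis
    using Pn amenable_epi[OF \<Gamma> Gn \<psi>] has_free_subgroup_epi[OF \<Gamma> Gn \<psi>] large_epi[OF \<Gamma> Gn \<psi>]
    by (cases P) auto
qed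

end
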